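(* Let $(\mathcal{X},c)$ be a metric space with diameter at most $1$ and let $\mu,\nu$ be discrete probability distributions on $\mathcal{X}$ with finite supports. Then $\mathrm{RPW}_{\infty,1}(\mu,\nu)=\mathrm{LP}(\mu,\nu)$.
   Context: $c(x,y)\le1$ for all $x,y$. For $\alpha\in[0,1]$, a partial transport plan of mass $\alpha$ between $\mu,\nu$ is a nonnegative measure $\gamma$ on $\mathcal{X}\times\mathcal{X}$ of total mass $\alpha$ with first marginal $\le\mu$ and second marginal $\le\nu$ (setwise). Its $\infty$-cost $w_\infty(\gamma)$ is the maximum of $c$ over the support of $\gamma$, and $W_{\infty,\alpha}(\mu,\nu)=\inf w_\infty(\gamma)$ over such $\gamma$. $\mathrm{RPW}_{\infty,k}(\mu,\nu)=\inf\{\varepsilon\in[0,1]: W_{\infty,1-\varepsilon}(\mu,\nu)\le k\varepsilon\}$. The Lévy–Prokhorov distance is $\mathrm{LP}(\mu,\nu)=\inf\{\varepsilon>0: \mu(A)\le\nu(A^\varepsilon)+\varepsilon \text{ and } \nu(A)\le\mu(A^\varepsilon)+\varepsilon \text{ for all Borel } A\}$, where $A^\varepsilon=\{x: \inf_{a\in A}c(x,a)<\varepsilon\}$. *)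

theory Defs
  imports "HOL-Probability.Probability"
begin

text \<open>Cost c = dist on a metric space. Discrete measures are pmfs.
  A partial transport plan between finitely supported pmfs is represented as a
  nonnegative, finitely supported mass function on pairs.\<close>

definition plan_supp :: "('a \<times> 'a \<Rightarrow> real) \<Rightarrow> ('a \<times> 'a) set" where
  "plan_supp \<gamma> = {p. \<gamma> p \<noteq> 0}"

definition partial_plan :: "'a pmf \<Rightarrow> 'a pmf \<Rightarrow> real \<Rightarrow> ('a \<times> 'a \<Rightarrow> real) \<Rightarrow> bool" where
  "partial_plan \<mu> \<nu> \<alpha> \<gamma> \<longleftrightarrow>
     (\<forall>p. 0 \<le> \<gamma> p) \<and> finite (plan_supp \<gamma>) \<and>
     (\<Sum>p\<in>plan_supp \<gamma>. \<gamma> p) = \<alpha> \<and>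
     (\<forall>A. (\<Sum>p\<in>plan_supp \<gamma> \<inter> (A \<times> UNIV). \<gamma> p) \<le> measure (measure_pmf \<mu>) A) \<and>
     (\<forall>B. (\<Sum>p\<in>plan_supp \<gamma> \<inter> (UNIV \<times> B). \<gamma> p) \<le> measure (measure_pmf \<nu>) B)"

definition w_inf :: "('a::metric_space \<times> 'a \<Rightarrow> real) \<Rightarrow> real" where
  "w_inf \<gamma> = Max (insert 0 ((\<lambda>(x,y). dist x y) ` plan_supp \<gamma>))"

definition W_inf :: "real \<Rightarrow> 'a::metric_space pmf \<Rightarrow> 'a pmf \<Rightarrow> real" where
  "W_inf \<alpha> \<mu> \<nu> = Inf {w_inf \<gamma> | \<gamma>. partial_plan \<mu> \<nu> \<alpha> \<gamma>}"

definition RPW_inf :: "real \<Rightarrow> 'a::metric_space pmf \<Rightarrow> 'a pmf \<Rightarrow> real" where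
  "RPW_inf k \<mu> \<nu> = Inf {\<epsilon> \<in> {0..1}. W_inf (1 - \<epsilon>) \<mu> \<nu> \<le> k * \<epsilon>}"

definition thick :: "'a::metric_space set \<Rightarrow> real \<Rightarrow> 'a set" where
  "thick A \<epsilon> = {x. \<exists>a\<in>A. dist x a < \<epsilon>}"

definition LP :: "'a::metric_space pmf \<Rightarrow> 'a pmf \<Rightarrow> real" where
  "LP \<mu> \<nu> = Inf {\<epsilon>. \<epsilon> > 0 \<and> (\<forall>A \<in> sets borel.
      measure (measure_pmf \<mu>) A \<le> measure (measure_pmf \<nu>) (thick A \<epsilon>) + \<epsilon> \<and>
      measure (measure_pmf \<nu>) A \<le> measure (measure_pmf \<mu>) (thick A \<epsilon>) + \<epsilon>)}"

end

theory Submission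
  imports Defs
begin

text \<open>
  If a partial plan of mass \<open>1 - \<epsilon>\<close> moves no point by \<open>\<epsilon>\<close> or more, then every set \<open>A\<close>
  loses at most the unmatched mass \<open>\<epsilon>\<close> when pushed into its \<open>\<epsilon>\<close>-thickening, so
  \<open>LP \<le> RPW\<close>. Conversely, the Levy-Prokhorov inequality \<open>\<mu> A \<le> \<nu> (thick A \<epsilon>) + \<epsilon>\<close> is
  precisely Hall's condition for sending the mass of \<open>\<mu>\<close> along the pairs at distance
  \<open>< \<epsilon>\<close> into the points of \<open>\<nu>\<close> together with an extra sink of capacity \<open>\<epsilon>\<close> that
  every point may use (finite Strassen theorem). A fractional Hall theorem gives a flow
  saturating \<open>\<mu>\<close>; the part not absorbed by the sink is a plan of mass at least
  \<open>1 - \<epsilon>\<close> and cost at most \<open>\<epsilon>\<close>, and scaling it down gives \<open>RPW \<le> LP\<close>.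

  The fractional Hall theorem is proved by induction on the number of supply points plus
  the number of positive capacities: push as much mass as Hall's condition allows along one
  edge \<open>(x0, y0)\<close>. Either the supply at \<open>x0\<close> or the capacity at \<open>y0\<close> is exhausted, or a
  set \<open>A\<close> of supply points not containing \<open>x0\<close> becomes tight, and then the problem splits
  into \<open>A\<close> and its complement with the neighbours of \<open>A\<close> removed.
\<close>

section \<open>A fractional Hall theorem\<close>

definition neighbours :: "('x \<Rightarrow> 'y \<Rightarrow> bool) \<Rightarrow> 'y set \<Rightarrow> 'x set \<Rightarrow> 'y set" where
  "neighbours R Y A = {y\<in>Y. \<exists>x\<in>A. R x y}"

definition hall_condition ::
    "('x \<Rightarrow> 'y \<Rightarrow> bool) \<Rightarrow> 'x set \<Rightarrow> 'y set \<Rightarrow> ('x \<Rightarrow> real) \<Rightarrow> ('y \<Rightarrow> real) \<Rightarrow> bool" where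
  "hall_condition R X Y a b \<longleftrightarrow> (\<forall>A\<subseteq>X. sum a A \<le> sum b (neighbours R Y A))"

definition saturating_flow :: "('x \<Rightarrow> 'y \<Rightarrow> bool) \<Rightarrow> 'x set \<Rightarrow> 'y set \<Rightarrow>
    ('x \<Rightarrow> real) \<Rightarrow> ('y \<Rightarrow> real) \<Rightarrow> ('x \<Rightarrow> 'y \<Rightarrow> real) \<Rightarrow> bool" where
  "saturating_flow R X Y a b f \<longleftrightarrow>
     (\<forall>x y. 0 \<le> f x y) \<and> (\<forall>x y. f x y \<noteq> 0 \<longrightarrow> x \<in> X \<and> y \<in> Y \<and> R x y) \<and>
     (\<forall>x\<in>X. sum (f x) Y = a x) \<and> (\<forall>y\<in>Y. (\<Sum>x\<in>X. f x y) \<le> b y)"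

lemma saturating_flowI:
  assumes "\<And>x y. 0 \<le> f x y" and "\<And>x y. f x y \<noteq> 0 \<Longrightarrow> x \<in> X \<and> y \<in> Y \<and> R x y"
    and "\<And>x. x \<in> X \<Longrightarrow> sum (f x) Y = a x" and "\<And>y. y \<in> Y \<Longrightarrow> (\<Sum>x\<in>X. f x y) \<le> b y"
  shows "saturating_flow R X Y a b f"
  using assms unfolding saturating_flow_def by blast

lemma neighbours_subset: "neighbours R Y A \<subseteq> Y"
  unfolding neighbours_def by auto

lemma hall_conditionD:
  "hall_condition R X Y a b \<Longrightarrow> A \<subseteq> X \<Longrightarrow> sum a A \<le> sum b (neighbours R Y A)"
  unfolding hall_condition_def by blast

lemma hall_condition_subset:
  "hall_condition R X Y a b \<Longrightarrow> X' \<subseteq> X \<Longrightarrow> hall_condition R X' Y a b"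
  unfolding hall_condition_def by auto

lemma saturating_flow_empty: "saturating_flow R {} Y a b (\<lambda>_ _. 0) \<longleftrightarrow> (\<forall>y\<in>Y. 0 \<le> b y)"
  unfolding saturating_flow_def by auto

lemma saturating_flow_insert_zero:
  assumes "saturating_flow R X Y a b f" and "a x = 0" and "finite X"
  shows "saturating_flow R (insert x X) Y a b f"
proof (cases "x \<in> X")
  case False
  then have "f x y = 0" for y
    using assms(1) unfolding saturating_flow_def by blast
  then show ?thesis
    using assms False unfolding saturating_flow_def by auto
qed (simp add: assms(1) insert_absorb)

lemma saturating_flow_add_edge:
  assumes f: "saturating_flow R X Y (\<lambda>x. a x - (if x = x0 then t else 0))
                                     (\<lambda>y. b y - (if y = y0 then t else 0)) f"
    and "finite X" "finite Y" "x0 \<in> X" "y0 \<in> Y" "R x0 y0" "0 \<le> t"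
  shows "saturating_flow R X Y a b (\<lambda>x y. f x y + (if x = x0 \<and> y = y0 then t else 0))"
proof -
  have row: "(\<Sum>y\<in>Y. if x = x0 \<and> y = y0 then t else 0) = (if x = x0 then t else 0)" for x
    using assms(3,5) by (cases "x = x0") auto
  have col: "(\<Sum>x\<in>X. if x = x0 \<and> y = y0 then t else 0) = (if y = y0 then t else 0)" for y
    using assms(2,4) by (cases "y = y0") auto
  show ?thesis
    using f assms(4-7) unfolding saturating_flow_def
    by (auto simp: sum.distrib row col split: if_splits)
qed

lemma sum_minus_delta:
  "finite A \<Longrightarrow> (\<Sum>x\<in>A. a x - (if x = x0 then t else 0)) = sum a A - (if x0 \<in> A then t else (0::real))"
  by (simp add: sum_subtractf)

lemma hall_condition_add_edge:
  assumes H: "hall_condition R X Y a b" and "finite X" "finite Y" "y0 \<in> Y" "R x0 y0"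
    and slack: "\<And>A. A \<subseteq> X - {x0} \<Longrightarrow> y0 \<in> neighbours R Y A \<Longrightarrow>
                       t \<le> sum b (neighbours R Y A) - sum a A"
  shows "hall_condition R X Y (\<lambda>x. a x - (if x = x0 then t else 0))
                             (\<lambda>y. b y - (if y = y0 then t else 0))"
  unfolding hall_condition_def
proof (intro allI impI)
  fix A assume AX: "A \<subseteq> X"
  have fin: "finite A" "finite (neighbours R Y A)"
    using AX assms(2,3) finite_subset[OF neighbours_subset] finite_subset by auto
  have "sum a A \<le> sum b (neighbours R Y A)"
    using hall_conditionD[OF H AX] .
  moreover have "y0 \<in> neighbours R Y A" if "x0 \<in> A"
    using that assms(4,5) unfolding neighbours_def by blast
  moreover have "t \<le> sum b (neighbours R Y A) - sum a A" if "x0 \<notin> A" "y0 \<in> neighbours R Y A"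
    using slack AX that by blast
  ultimately show "(\<Sum>x\<in>A. a x - (if x = x0 then t else 0))
      \<le> (\<Sum>y\<in>neighbours R Y A. b y - (if y = y0 then t else 0))"
    unfolding sum_minus_delta[OF fin(1)] sum_minus_delta[OF fin(2)] by auto
qed

lemma hall_condition_residual:
  assumes H: "hall_condition R X Y a b" and "finite X" "finite Y" "A \<subseteq> X"
    and tight: "sum a A = sum b (neighbours R Y A)"
  shows "hall_condition R (X - A) Y a (\<lambda>y. if y \<in> neighbours R Y A then 0 else b y)"
  unfolding hall_condition_def
proof (intro allI impI)
  fix C assume C: "C \<subseteq> X - A"
  let ?N = "neighbours R Y"
  have fin: "finite A" "finite C" "finite (?N A)" "finite (?N C)"
    using C assms(2-4) finite_subset[OF neighbours_subset] finite_subset[of _ X] by blast+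
  have "sum a C + sum a A = sum a (C \<union> A)"
    using C fin by (subst sum.union_disjoint) auto
  also have "\<dots> \<le> sum b (?N (C \<union> A))"
    using C assms(4) by (intro hall_conditionD[OF H]) blast
  also have "?N (C \<union> A) = (?N C - ?N A) \<union> ?N A"
    unfolding neighbours_def by blast
  also have "sum b \<dots> = sum b (?N C - ?N A) + sum b (?N A)"
    using fin by (subst sum.union_disjoint) auto
  also have "sum b (?N C - ?N A) = (\<Sum>y\<in>?N C. if y \<in> ?N A then 0 else b y)"
    using fin by (simp add: sum.If_cases Diff_eq)
  finally show "sum a C \<le> (\<Sum>y\<in>?N C. if y \<in> ?N A then 0 else b y)"
    using tight by simp
qed

lemma saturating_flow_glue:
  assumes "A \<subseteq> X" "finite X"
    and f1: "saturating_flow R A Y a b f1"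
    and f2: "saturating_flow R (X - A) Y a (\<lambda>y. if y \<in> neighbours R Y A then 0 else b y) f2"
  shows "saturating_flow R X Y a b (\<lambda>x. if x \<in> A then f1 x else f2 x)"
proof (rule saturating_flowI)
  fix x y
  show "0 \<le> (if x \<in> A then f1 x else f2 x) y"
    using f1 f2 unfolding saturating_flow_def by simp
next
  fix x y
  assume "(if x \<in> A then f1 x else f2 x) y \<noteq> 0"
  then show "x \<in> X \<and> y \<in> Y \<and> R x y"
    using f1 f2 assms(1) unfolding saturating_flow_def by (cases "x \<in> A") auto
next
  fix x assume "x \<in> X"
  then show "sum (if x \<in> A then f1 x else f2 x) Y = a x"
    using f1 f2 unfolding saturating_flow_def by (cases "x \<in> A") auto
next
  fix y assume y: "y \<in> Y"
  have "(\<Sum>x\<in>X. (if x \<in> A then f1 x else f2 x) y) = (\<Sum>x\<in>A. f1 x y) + (\<Sum>x\<in>X - A. f2 x y)"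
    using assms(1,2) by (simp add: if_distrib[of "\<lambda>g. g y"] sum.If_cases Int_absorb1 Diff_eq)
  moreover have "(\<Sum>x\<in>A. f1 x y) \<le> b y"
    using f1 y unfolding saturating_flow_def by blast
  moreover have "(\<Sum>x\<in>X - A. f2 x y) \<le> (if y \<in> neighbours R Y A then 0 else b y)"
    using f2 y unfolding saturating_flow_def by blast
  moreover have "(\<Sum>x\<in>A. f1 x y) = 0" if "y \<notin> neighbours R Y A"
  proof -
    have "f1 x y = 0" if "x \<in> A" for x
      using f1 y \<open>y \<notin> neighbours R Y A\<close> that unfolding saturating_flow_def neighbours_def by blast
    then show ?thesis by simp
  qed
  ultimately show "(\<Sum>x\<in>X. (if x \<in> A then f1 x else f2 x) y) \<le> b y"
    by (cases "y \<in> neighbours R Y A") auto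
qed

text \<open>\<open>t\<close> is the largest amount that can be pushed along \<open>(x0, y0)\<close> while keeping Hall's condition.\<close>

lemma hall_condition_push_edge:
  assumes H: "hall_condition R X Y a b" and fin: "finite X" "finite Y"
    and x0: "x0 \<in> X" and a_pos: "0 < a x0"
  obtains y0 t where "y0 \<in> Y" "R x0 y0" "0 < b y0" "0 \<le> t" "t \<le> a x0" "t \<le> b y0"
    "hall_condition R X Y (\<lambda>x. a x - (if x = x0 then t else 0)) (\<lambda>y. b y - (if y = y0 then t else 0))"
    "t = a x0 \<or> t = b y0 \<or>
     (\<exists>A\<subseteq>X - {x0}. y0 \<in> neighbours R Y A \<and> t = sum b (neighbours R Y A) - sum a A)"
proof -
  have "sum a {x0} \<le> sum b (neighbours R Y {x0})"
    using hall_conditionD[OF H, of "{x0}"] x0 by simp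
  then have "0 < sum b (neighbours R Y {x0})"
    using a_pos by simp
  then obtain y0 where "y0 \<in> neighbours R Y {x0}" "0 < b y0"
    by (meson not_le sum_nonpos)
  then have y0: "y0 \<in> Y" "R x0 y0" "0 < b y0"
    unfolding neighbours_def by auto
  define slack where "slack A = sum b (neighbours R Y A) - sum a A" for A
  define \<A> where "\<A> = {A. A \<subseteq> X - {x0} \<and> y0 \<in> neighbours R Y A}"
  define T where "T = insert (a x0) (insert (b y0) (slack ` \<A>))"
  have "finite \<A>"
    unfolding \<A>_def using fin(1) by (auto intro: finite_subset[of _ "Pow (X - {x0})"])
  then have T: "finite T" "T \<noteq> {}"
    unfolding T_def by auto
  have slack_nonneg: "0 \<le> slack A" if "A \<in> \<A>" for A
    using hall_conditionD[OF H, of A] that unfolding slack_def \<A>_def by auto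
  define t where "t = Min T"
  have "0 \<le> t"
    unfolding t_def T_def using T a_pos y0(3) slack_nonneg by (auto simp: T_def Min_ge_iff)
  moreover have "t \<le> a x0" "t \<le> b y0" and t_slack: "\<And>A. A \<in> \<A> \<Longrightarrow> t \<le> slack A"
    unfolding t_def using Min_le[OF T(1)] by (auto simp: T_def)
  moreover have "hall_condition R X Y (\<lambda>x. a x - (if x = x0 then t else 0)) (\<lambda>y. b y - (if y = y0 then t else 0))"
    by (rule hall_condition_add_edge[OF H fin y0(1,2)]) (use t_slack in \<open>auto simp: \<A>_def slack_def\<close>)
  moreover have "t \<in> T"
    unfolding t_def using T by (rule Min_in)
  then have "t = a x0 \<or> t = b y0 \<or>
     (\<exists>A\<subseteq>X - {x0}. y0 \<in> neighbours R Y A \<and> t = sum b (neighbours R Y A) - sum a A)"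
    unfolding T_def \<A>_def slack_def by blast
  ultimately show ?thesis
    using that y0 by blast
qed

lemma saturating_flow_split_tight:
  assumes H: "hall_condition R X Y a b" and finX: "finite X" and finY: "finite Y"
    and b_nonneg: "\<forall>y. 0 \<le> b y"
    and A: "A \<subseteq> X" "A \<noteq> {}" "A \<noteq> X" and tight: "sum a A = sum b (neighbours R Y A)"
    and solve: "\<And>X' b'. X' \<subseteq> X \<Longrightarrow> X' \<noteq> X \<Longrightarrow> \<forall>y. 0 \<le> b' y \<and> b' y \<le> b y \<Longrightarrow>
                  hall_condition R X' Y a b' \<Longrightarrow> \<exists>f. saturating_flow R X' Y a b' f"
  shows "\<exists>f. saturating_flow R X Y a b f"
proof -
  obtain f1 where f1: "saturating_flow R A Y a b f1"
    using solve[OF A(1,3) _ hall_condition_subset[OF H A(1)]] b_nonneg by blast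
  define b2 where "b2 = (\<lambda>y. if y \<in> neighbours R Y A then 0 else b y)"
  have "hall_condition R (X - A) Y a b2"
    unfolding b2_def by (rule hall_condition_residual[OF H finX finY A(1) tight])
  moreover have "\<forall>y. 0 \<le> b2 y \<and> b2 y \<le> b y" and "X - A \<noteq> X"
    using b_nonneg A(1,2) unfolding b2_def by auto
  ultimately obtain f2 where "saturating_flow R (X - A) Y a b2 f2"
    using solve[OF Diff_subset] by blast
  then show ?thesis
    using saturating_flow_glue[OF A(1) finX f1] unfolding b2_def by blast
qed

lemma saturating_flow_induct_step:
  assumes finX: "finite X" and finY: "finite Y" and X: "X \<noteq> {}"
    and a_nonneg: "\<forall>x. 0 \<le> a x" and b_nonneg: "\<forall>y. 0 \<le> b y" and H: "hall_condition R X Y a b"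
    and smaller: "\<And>X' a' b'. X' \<subseteq> X \<Longrightarrow> X' \<noteq> X \<or> (\<exists>y\<in>Y. 0 < b y \<and> b' y = 0) \<Longrightarrow>
       \<forall>y. 0 \<le> b' y \<and> b' y \<le> b y \<Longrightarrow> \<forall>x. 0 \<le> a' x \<Longrightarrow> hall_condition R X' Y a' b' \<Longrightarrow>
       \<exists>f. saturating_flow R X' Y a' b' f"
  shows "\<exists>f. saturating_flow R X Y a b f"
proof -
  obtain x0 where x0: "x0 \<in> X"
    using X by blast
  have drop_row: "\<exists>f. saturating_flow R X Y a' b' f"
    if "a' x0 = 0" and b': "\<forall>y. 0 \<le> b' y \<and> b' y \<le> b y"
      and a': "\<forall>x. 0 \<le> a' x" and H': "hall_condition R X Y a' b'" for a' b'
  proof -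
    have "X - {x0} \<noteq> X"
      using x0 by blast
    then obtain f where "saturating_flow R (X - {x0}) Y a' b' f"
      using smaller[OF Diff_subset _ b' a' hall_condition_subset[OF H' Diff_subset]] by blast
    then have "saturating_flow R (insert x0 (X - {x0})) Y a' b' f"
      using \<open>a' x0 = 0\<close> finX by (intro saturating_flow_insert_zero) auto
    then show ?thesis
      using x0 by (auto simp: insert_absorb)
  qed
  show ?thesis
  proof (cases "a x0 = 0")
    case True
    show ?thesis
      by (rule drop_row[OF True _ a_nonneg H]) (use b_nonneg in simp)
  next
    case False
    then have "0 < a x0"
      using a_nonneg by (simp add: order_less_le)
    obtain y0 t where y0: "y0 \<in> Y" "R x0 y0" "0 < b y0" and t: "0 \<le> t" "t \<le> a x0" "t \<le> b y0"
      and H': "hall_condition R X Y (\<lambda>x. a x - (if x = x0 then t else 0)) (\<lambda>y. b y - (if y = y0 then t else 0))"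
      and cases: "t = a x0 \<or> t = b y0 \<or>
        (\<exists>A\<subseteq>X - {x0}. y0 \<in> neighbours R Y A \<and> t = sum b (neighbours R Y A) - sum a A)"
      by (rule hall_condition_push_edge[OF H finX finY x0 \<open>0 < a x0\<close>])
    define a' where "a' = (\<lambda>x. a x - (if x = x0 then t else 0))"
    define b' where "b' = (\<lambda>y. b y - (if y = y0 then t else 0))"
    note H' = H'[folded a'_def b'_def]
    have a': "\<forall>x. 0 \<le> a' x" and b': "\<forall>y. 0 \<le> b' y \<and> b' y \<le> b y"
      using a_nonneg b_nonneg t unfolding a'_def b'_def by auto
    have "\<exists>f. saturating_flow R X Y a' b' f"
      using cases
    proof (elim disjE exE conjE)
      assume "t = a x0"
      show ?thesis
        by (rule drop_row[OF _ b' a' H']) (simp add: a'_def \<open>t = a x0\<close>)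
    next
      assume "t = b y0"
      then have "\<exists>y\<in>Y. 0 < b y \<and> b' y = 0"
        using y0 unfolding b'_def by auto
      then show ?thesis
        using smaller[OF order_refl _ b' a' H'] by blast
    next
      fix A assume A: "A \<subseteq> X - {x0}" "y0 \<in> neighbours R Y A"
        and "t = sum b (neighbours R Y A) - sum a A"
      have "finite A" "finite (neighbours R Y A)" "x0 \<notin> A"
        using A(1) finX finY finite_subset[OF neighbours_subset] finite_subset[of A X] by blast+
      then have "sum a' A = sum b' (neighbours R Y A)"
        using A(2) \<open>t = _\<close> unfolding a'_def b'_def by (simp add: sum_minus_delta)
      moreover have "A \<subseteq> X" "A \<noteq> {}" "A \<noteq> X"
        using A x0 unfolding neighbours_def by blast+
      ultimately show ?thesis
      proof (intro saturating_flow_split_tight[OF H' finX finY])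
        fix X'' b'' assume "X'' \<subseteq> X" "X'' \<noteq> X" and b'': "\<forall>y. 0 \<le> b'' y \<and> b'' y \<le> b' y"
          and "hall_condition R X'' Y a' b''"
        moreover have "\<forall>y. 0 \<le> b'' y \<and> b'' y \<le> b y"
          using b' b'' by (meson order_trans)
        ultimately show "\<exists>f. saturating_flow R X'' Y a' b'' f"
          using smaller a' by blast
      qed (use b' in blast)
    qed
    then obtain f where "saturating_flow R X Y a' b' f" ..
    from saturating_flow_add_edge[OF this[unfolded a'_def b'_def] finX finY x0 y0(1,2) t(1)]
    show ?thesis by blast
  qed
qed

theorem hall_condition_imp_saturating_flow:
  assumes "finite X" "finite Y" "\<forall>x. 0 \<le> a x" "\<forall>y. 0 \<le> b y" "hall_condition R X Y a b"
  shows "\<exists>f. saturating_flow R X Y a b f"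
  using assms
proof (induction "card X + card {y\<in>Y. 0 < b y}" arbitrary: X a b rule: less_induct)
  case less
  note finX = less.prems(1) and finY = less.prems(2)
  show ?case
  proof (cases "X = {}")
    case True
    then show ?thesis
      using saturating_flow_empty less.prems(4) by blast
  next
    case False
    show ?thesis
    proof (rule saturating_flow_induct_step[OF finX finY False less.prems(3-5)])
      fix X' a' b'
      assume X': "X' \<subseteq> X" "X' \<noteq> X \<or> (\<exists>y\<in>Y. 0 < b y \<and> b' y = 0)"
        and b': "\<forall>y. 0 \<le> b' y \<and> b' y \<le> b y" and "\<forall>x. 0 \<le> a' x" "hall_condition R X' Y a' b'"
      have pos: "{y\<in>Y. 0 < b' y} \<subseteq> {y\<in>Y. 0 < b y}"
        using b' by (auto intro: less_le_trans)
      have "card X' \<le> card X" "card {y\<in>Y. 0 < b' y} \<le> card {y\<in>Y. 0 < b y}"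
        using card_mono[OF finX X'(1)] card_mono[OF _ pos] finY by auto
      moreover have "X' \<subset> X \<or> {y\<in>Y. 0 < b' y} \<subset> {y\<in>Y. 0 < b y}"
        using X' pos by fastforce
      then have "card X' < card X \<or> card {y\<in>Y. 0 < b' y} < card {y\<in>Y. 0 < b y}"
        using finX finY by (auto intro: psubset_card_mono)
      ultimately have "card X' + card {y\<in>Y. 0 < b' y} < card X + card {y\<in>Y. 0 < b y}"
        by linarith
      then show "\<exists>f. saturating_flow R X' Y a' b' f"
        using less.hyps finite_subset[OF X'(1) finX] finY b' \<open>\<forall>x. 0 \<le> a' x\<close>
          \<open>hall_condition R X' Y a' b'\<close> by blast
    qed
  qed
qed

section \<open>Partial transport plans between finitely supported measures\<close>

lemma measure_pmf_eq_sum_Int_set_pmf: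
  "finite (set_pmf \<mu>) \<Longrightarrow> measure (measure_pmf \<mu>) A = (\<Sum>x\<in>A \<inter> set_pmf \<mu>. pmf \<mu> x)"
  by (metis measure_Int_set_pmf measure_measure_pmf_finite finite_Int)

lemma sum_plan_supp_superset:
  "plan_supp \<gamma> \<subseteq> S \<Longrightarrow> finite S \<Longrightarrow> (\<Sum>p\<in>plan_supp \<gamma> \<inter> C. \<gamma> p) = (\<Sum>p\<in>S \<inter> C. \<gamma> p)"
  by (rule sum.mono_neutral_left) (auto simp: plan_supp_def)

lemma sum_plan_supp_Times:
  assumes "finite S" "finite T" "plan_supp \<gamma> \<subseteq> S \<times> T"
  shows "(\<Sum>p\<in>plan_supp \<gamma> \<inter> (A \<times> B). \<gamma> p) = (\<Sum>x\<in>A \<inter> S. \<Sum>y\<in>B \<inter> T. \<gamma> (x, y))"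
proof -
  have "(S \<times> T) \<inter> (A \<times> B) = (A \<inter> S) \<times> (B \<inter> T)"
    by blast
  then show ?thesis
    using assms by (simp add: sum_plan_supp_superset sum.cartesian_product')
qed

lemma partial_planI_marginals:
  fixes \<gamma> :: "'a \<times> 'a \<Rightarrow> real"
  assumes fin: "finite (set_pmf \<mu>)" "finite (set_pmf \<nu>)"
    and nonneg: "\<And>p. 0 \<le> \<gamma> p" and supp: "plan_supp \<gamma> \<subseteq> set_pmf \<mu> \<times> set_pmf \<nu>"
    and row: "\<And>x. x \<in> set_pmf \<mu> \<Longrightarrow> (\<Sum>y\<in>set_pmf \<nu>. \<gamma> (x, y)) \<le> pmf \<mu> x"
    and col: "\<And>y. y \<in> set_pmf \<nu> \<Longrightarrow> (\<Sum>x\<in>set_pmf \<mu>. \<gamma> (x, y)) \<le> pmf \<nu> y"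
  shows "partial_plan \<mu> \<nu> (\<Sum>p\<in>plan_supp \<gamma>. \<gamma> p) \<gamma>"
  unfolding partial_plan_def
proof (intro conjI allI)
  show "finite (plan_supp \<gamma>)"
    using supp fin by (rule finite_subset[OF _ finite_cartesian_product])
next
  fix A
  have "(\<Sum>p\<in>plan_supp \<gamma> \<inter> (A \<times> UNIV). \<gamma> p) = (\<Sum>x\<in>A \<inter> set_pmf \<mu>. \<Sum>y\<in>set_pmf \<nu>. \<gamma> (x, y))"
    using sum_plan_supp_Times[OF fin supp] by simp
  also have "\<dots> \<le> (\<Sum>x\<in>A \<inter> set_pmf \<mu>. pmf \<mu> x)"
    using row by (intro sum_mono) auto
  finally show "(\<Sum>p\<in>plan_supp \<gamma> \<inter> (A \<times> UNIV). \<gamma> p) \<le> measure (measure_pmf \<mu>) A"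
    using fin by (simp add: measure_pmf_eq_sum_Int_set_pmf)
next
  fix B
  have "(\<Sum>p\<in>plan_supp \<gamma> \<inter> (UNIV \<times> B). \<gamma> p) = (\<Sum>x\<in>set_pmf \<mu>. \<Sum>y\<in>B \<inter> set_pmf \<nu>. \<gamma> (x, y))"
    using sum_plan_supp_Times[OF fin supp] by simp
  also have "\<dots> = (\<Sum>y\<in>B \<inter> set_pmf \<nu>. \<Sum>x\<in>set_pmf \<mu>. \<gamma> (x, y))"
    by (rule sum.swap)
  also have "\<dots> \<le> (\<Sum>y\<in>B \<inter> set_pmf \<nu>. pmf \<nu> y)"
    using col by (intro sum_mono) auto
  finally show "(\<Sum>p\<in>plan_supp \<gamma> \<inter> (UNIV \<times> B). \<gamma> p) \<le> measure (measure_pmf \<nu>) B"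
    using fin by (simp add: measure_pmf_eq_sum_Int_set_pmf)
qed (use nonneg in auto)

lemma w_inf_nonneg: "finite (plan_supp \<gamma>) \<Longrightarrow> 0 \<le> w_inf \<gamma>"
  unfolding w_inf_def by (rule Max_ge) auto

lemma dist_le_w_inf: "finite (plan_supp \<gamma>) \<Longrightarrow> (x, y) \<in> plan_supp \<gamma> \<Longrightarrow> dist x y \<le> w_inf \<gamma>"
  unfolding w_inf_def by (rule Max_ge) force+

lemma w_inf_le:
  "finite (plan_supp \<gamma>) \<Longrightarrow> 0 \<le> c \<Longrightarrow> (\<And>x y. (x, y) \<in> plan_supp \<gamma> \<Longrightarrow> dist x y \<le> c) \<Longrightarrow> w_inf \<gamma> \<le> c"
  unfolding w_inf_def by (subst Max_le_iff) auto

lemma w_inf_mono: "plan_supp \<gamma>' \<subseteq> plan_supp \<gamma> \<Longrightarrow> finite (plan_supp \<gamma>) \<Longrightarrow> w_inf \<gamma>' \<le> w_inf \<gamma>"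
  unfolding w_inf_def by (rule Max_mono) auto

lemma plan_supp_scale_subset: "plan_supp (\<lambda>p. k * \<gamma> p) \<subseteq> plan_supp \<gamma>"
  unfolding plan_supp_def by auto

lemma partial_plan_scale:
  assumes P: "partial_plan \<mu> \<nu> \<alpha> \<gamma>" and c: "0 \<le> c" "c \<le> \<alpha>"
  shows "partial_plan \<mu> \<nu> c (\<lambda>p. c / \<alpha> * \<gamma> p)"
proof -
  define k where "k = c / \<alpha>"
  have k: "0 \<le> k" "k \<le> 1"
    using c unfolding k_def by (auto simp: divide_le_eq_1)
  have nonneg: "\<And>p. 0 \<le> \<gamma> p" and fin: "finite (plan_supp \<gamma>)"
    and mass: "(\<Sum>p\<in>plan_supp \<gamma>. \<gamma> p) = \<alpha>"
    and fst: "\<And>A. (\<Sum>p\<in>plan_supp \<gamma> \<inter> (A \<times> UNIV). \<gamma> p) \<le> measure (measure_pmf \<mu>) A"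
    and snd: "\<And>B. (\<Sum>p\<in>plan_supp \<gamma> \<inter> (UNIV \<times> B). \<gamma> p) \<le> measure (measure_pmf \<nu>) B"
    using P unfolding partial_plan_def by auto
  note supp = plan_supp_scale_subset[of k \<gamma>]
  have sum_scaled: "(\<Sum>p\<in>plan_supp (\<lambda>p. k * \<gamma> p) \<inter> C. k * \<gamma> p) = k * (\<Sum>p\<in>plan_supp \<gamma> \<inter> C. \<gamma> p)" for C
    using sum_plan_supp_superset[OF supp fin, of C] by (simp add: sum_distrib_left)
  have shrink: "k * (\<Sum>p\<in>plan_supp \<gamma> \<inter> C. \<gamma> p) \<le> (\<Sum>p\<in>plan_supp \<gamma> \<inter> C. \<gamma> p)" for C
    using k nonneg by (intro mult_left_le_one_le sum_nonneg) auto
  have "k * \<alpha> = c"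
    using c unfolding k_def by auto
  then show ?thesis
    unfolding partial_plan_def k_def[symmetric]
  proof (intro conjI allI)
    fix A
    show "(\<Sum>p\<in>plan_supp (\<lambda>p. k * \<gamma> p) \<inter> (A \<times> UNIV). k * \<gamma> p) \<le> measure (measure_pmf \<mu>) A"
      unfolding sum_scaled using shrink fst by (rule order_trans)
    show "(\<Sum>p\<in>plan_supp (\<lambda>p. k * \<gamma> p) \<inter> (UNIV \<times> A). k * \<gamma> p) \<le> measure (measure_pmf \<nu>) A"
      unfolding sum_scaled using shrink snd by (rule order_trans)
  next
    show "(\<Sum>p\<in>plan_supp (\<lambda>p. k * \<gamma> p). k * \<gamma> p) = c"
      using sum_scaled[of UNIV] mass \<open>k * \<alpha> = c\<close> by simp
  qed (use k(1) nonneg finite_subset[OF supp fin] in simp_all)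
qed

lemma partial_plan_exists:
  fixes \<mu> \<nu> :: "'a pmf"
  assumes fin: "finite (set_pmf \<mu>)" "finite (set_pmf \<nu>)" and "0 \<le> \<alpha>" "\<alpha> \<le> 1"
  shows "\<exists>\<gamma>. partial_plan \<mu> \<nu> \<alpha> \<gamma>"
proof -
  define \<gamma> where "\<gamma> = (\<lambda>(x::'a, y::'a). pmf \<mu> x * pmf \<nu> y)"
  have supp: "plan_supp \<gamma> = set_pmf \<mu> \<times> set_pmf \<nu>"
    unfolding plan_supp_def \<gamma>_def by (auto simp: set_pmf_eq)
  have row: "(\<Sum>y\<in>set_pmf \<nu>. \<gamma> (x, y)) = pmf \<mu> x" for x
    unfolding \<gamma>_def using fin(2) by (simp add: sum_distrib_left[symmetric] sum_pmf_eq_1)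
  have col: "(\<Sum>x\<in>set_pmf \<mu>. \<gamma> (x, y)) = pmf \<nu> y" for y
    unfolding \<gamma>_def using fin(1) by (simp add: sum_distrib_right[symmetric] sum_pmf_eq_1)
  have "0 \<le> \<gamma> p" for p
    unfolding \<gamma>_def by (simp add: case_prod_beta)
  then have "partial_plan \<mu> \<nu> (\<Sum>p\<in>plan_supp \<gamma>. \<gamma> p) \<gamma>"
    by (intro partial_planI_marginals[OF fin]) (simp_all add: supp row col)
  moreover have "(\<Sum>p\<in>plan_supp \<gamma>. \<gamma> p) = 1"
    unfolding supp sum.cartesian_product' row using fin(1) by (simp add: sum_pmf_eq_1)
  ultimately have "partial_plan \<mu> \<nu> 1 \<gamma>"
    by simp
  from partial_plan_scale[OF this assms(3,4)] show ?thesis by blast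
qed

lemma partial_plan_swap:
  assumes P: "partial_plan \<mu> \<nu> \<alpha> \<gamma>"
  shows "partial_plan \<nu> \<mu> \<alpha> (\<gamma> \<circ> prod.swap)" and "w_inf (\<gamma> \<circ> prod.swap) = w_inf \<gamma>"
proof -
  have supp: "plan_supp (\<gamma> \<circ> prod.swap) = prod.swap ` plan_supp \<gamma>"
    unfolding plan_supp_def by force
  have sum_swap: "(\<Sum>p\<in>plan_supp (\<gamma> \<circ> prod.swap) \<inter> prod.swap ` C. \<gamma> (prod.swap p))
      = (\<Sum>p\<in>plan_supp \<gamma> \<inter> C. \<gamma> p)" for C
    unfolding supp image_Int[OF inj_swap, symmetric]
    using sum.reindex[OF inj_swap, of "\<lambda>p. \<gamma> (prod.swap p)" "plan_supp \<gamma> \<inter> C"] by simp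
  have swap_Times: "prod.swap ` (UNIV \<times> A) = A \<times> UNIV" "prod.swap ` (A \<times> UNIV) = UNIV \<times> A"
    "prod.swap ` UNIV = UNIV" for A :: "'a set"
    by (auto simp: image_iff)
  show "partial_plan \<nu> \<mu> \<alpha> (\<gamma> \<circ> prod.swap)"
    unfolding partial_plan_def
  proof (intro conjI allI)
    fix A
    show "(\<Sum>p\<in>plan_supp (\<gamma> \<circ> prod.swap) \<inter> (A \<times> UNIV). (\<gamma> \<circ> prod.swap) p) \<le> measure (measure_pmf \<nu>) A"
      using sum_swap[of "UNIV \<times> A"] P unfolding swap_Times partial_plan_def by simp
    show "(\<Sum>p\<in>plan_supp (\<gamma> \<circ> prod.swap) \<inter> (UNIV \<times> A). (\<gamma> \<circ> prod.swap) p) \<le> measure (measure_pmf \<mu>) A"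
      using sum_swap[of "A \<times> UNIV"] P unfolding swap_Times partial_plan_def by simp
  next
    show "(\<Sum>p\<in>plan_supp (\<gamma> \<circ> prod.swap). (\<gamma> \<circ> prod.swap) p) = \<alpha>"
      using sum_swap[of UNIV] P unfolding swap_Times partial_plan_def by simp
  qed (use P in \<open>auto simp: partial_plan_def supp\<close>)
  have dist_swap: "(\<lambda>(x, y). dist x y) \<circ> prod.swap = (\<lambda>(x, y). dist x y)"
    by (auto simp: dist_commute)
  show "w_inf (\<gamma> \<circ> prod.swap) = w_inf \<gamma>"
    unfolding w_inf_def supp image_comp dist_swap ..
qed

section \<open>Comparison of RPW and LP\<close>

lemma measure_le_thick_partial_plan:
  assumes P: "partial_plan \<mu> \<nu> \<alpha> \<gamma>" and w: "w_inf \<gamma> < r"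
  shows "measure (measure_pmf \<mu>) A \<le> measure (measure_pmf \<nu>) (thick A r) + (1 - \<alpha>)"
proof -
  let ?S = "plan_supp \<gamma>"
  have nonneg: "\<And>p. 0 \<le> \<gamma> p" and fin: "finite ?S" and mass: "(\<Sum>p\<in>?S. \<gamma> p) = \<alpha>"
    and fst: "\<And>A. (\<Sum>p\<in>?S \<inter> (A \<times> UNIV). \<gamma> p) \<le> measure (measure_pmf \<mu>) A"
    and snd: "\<And>B. (\<Sum>p\<in>?S \<inter> (UNIV \<times> B). \<gamma> p) \<le> measure (measure_pmf \<nu>) B"
    using P unfolding partial_plan_def by auto
  have "(\<Sum>p\<in>?S. \<gamma> p) = (\<Sum>p\<in>?S \<inter> (A \<times> UNIV). \<gamma> p) + (\<Sum>p\<in>?S \<inter> ((- A) \<times> UNIV). \<gamma> p)"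
    using sum.Int_Diff[OF fin, of \<gamma> "A \<times> UNIV"] by (simp add: Diff_eq Compl_Times_UNIV1)
  moreover have "(\<Sum>p\<in>?S \<inter> ((- A) \<times> UNIV). \<gamma> p) \<le> 1 - measure (measure_pmf \<mu>) A"
    using fst[of "- A"] measure_pmf.prob_compl[of A \<mu>] by (simp add: Compl_eq_Diff_UNIV)
  moreover have "?S \<inter> (A \<times> UNIV) \<subseteq> ?S \<inter> (UNIV \<times> thick A r)"
  proof
    fix p assume p: "p \<in> ?S \<inter> (A \<times> UNIV)"
    obtain x y where xy: "p = (x, y)"
      by fastforce
    then have "dist y x < r"
      using p dist_le_w_inf[OF fin, of x y] w by (simp add: dist_commute)
    then show "p \<in> ?S \<inter> (UNIV \<times> thick A r)"
      using p unfolding xy thick_def by blast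
  qed
  then have "(\<Sum>p\<in>?S \<inter> (A \<times> UNIV). \<gamma> p) \<le> (\<Sum>p\<in>?S \<inter> (UNIV \<times> thick A r). \<gamma> p)"
    using fin nonneg by (intro sum_mono2) auto
  ultimately show ?thesis
    using snd[of "thick A r"] mass by linarith
qed

lemma W_inf_le: "partial_plan \<mu> \<nu> \<alpha> \<gamma> \<Longrightarrow> W_inf \<alpha> \<mu> \<nu> \<le> w_inf \<gamma>"
  unfolding W_inf_def
  by (rule cInf_lower) (auto intro!: bdd_belowI[of _ 0] w_inf_nonneg simp: partial_plan_def)

lemma W_inf_zero: "W_inf 0 \<mu> \<nu> = 0"
proof -
  have "partial_plan \<mu> \<nu> 0 (\<lambda>_. 0)" and "w_inf (\<lambda>_. 0) = 0"
    unfolding partial_plan_def w_inf_def plan_supp_def by auto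
  then have "W_inf 0 \<mu> \<nu> \<le> 0"
    using W_inf_le by metis
  moreover have "{w_inf \<gamma> | \<gamma>. partial_plan \<mu> \<nu> 0 \<gamma>} \<noteq> {}"
    using \<open>partial_plan \<mu> \<nu> 0 (\<lambda>_. 0)\<close> by blast
  then have "0 \<le> W_inf 0 \<mu> \<nu>"
    unfolding W_inf_def by (rule cInf_greatest) (auto simp: partial_plan_def w_inf_nonneg)
  ultimately show ?thesis
    by simp
qed

lemma W_inf_lessE:
  fixes \<mu> \<nu> :: "'a::metric_space pmf"
  assumes "finite (set_pmf \<mu>)" "finite (set_pmf \<nu>)" "0 \<le> \<alpha>" "\<alpha> \<le> 1" and "W_inf \<alpha> \<mu> \<nu> < r"
  obtains \<gamma> where "partial_plan \<mu> \<nu> \<alpha> \<gamma>" "w_inf \<gamma> < r"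
proof -
  have "{w_inf \<gamma> | \<gamma>. partial_plan \<mu> \<nu> \<alpha> \<gamma>} \<noteq> {}"
    using partial_plan_exists[OF assms(1-4)] by blast
  from cInf_lessD[OF this] assms(5) show ?thesis
    unfolding W_inf_def using that by blast
qed

lemma RPW_inf_le:
  "0 \<le> \<epsilon> \<Longrightarrow> \<epsilon> \<le> 1 \<Longrightarrow> W_inf (1 - \<epsilon>) \<mu> \<nu> \<le> k * \<epsilon> \<Longrightarrow> RPW_inf k \<mu> \<nu> \<le> \<epsilon>"
  unfolding RPW_inf_def by (rule cInf_lower) (auto intro: bdd_belowI[of _ 0])

lemma LP_le:
  assumes "0 < \<epsilon>"
    and "\<And>A. measure (measure_pmf \<mu>) A \<le> measure (measure_pmf \<nu>) (thick A \<epsilon>) + \<epsilon>"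
    and "\<And>A. measure (measure_pmf \<nu>) A \<le> measure (measure_pmf \<mu>) (thick A \<epsilon>) + \<epsilon>"
  shows "LP \<mu> \<nu> \<le> \<epsilon>"
  unfolding LP_def by (rule cInf_lower) (use assms in \<open>auto intro: bdd_belowI[of _ 0]\<close>)

lemma LP_le_RPW_inf:
  fixes \<mu> \<nu> :: "'a::metric_space pmf"
  assumes fin: "finite (set_pmf \<mu>)" "finite (set_pmf \<nu>)"
  shows "LP \<mu> \<nu> \<le> RPW_inf 1 \<mu> \<nu>"
  unfolding RPW_inf_def
proof (rule cInf_greatest)
  show "{\<epsilon> \<in> {0..1}. W_inf (1 - \<epsilon>) \<mu> \<nu> \<le> 1 * \<epsilon>} \<noteq> {}"
    using W_inf_zero[of \<mu> \<nu>] by force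
next
  fix \<epsilon> assume "\<epsilon> \<in> {\<epsilon> \<in> {0..1}. W_inf (1 - \<epsilon>) \<mu> \<nu> \<le> 1 * \<epsilon>}"
  then have \<epsilon>: "0 \<le> \<epsilon>" "\<epsilon> \<le> 1" and W: "W_inf (1 - \<epsilon>) \<mu> \<nu> \<le> \<epsilon>"
    by auto
  show "LP \<mu> \<nu> \<le> \<epsilon>"
  proof (rule field_le_epsilon)
    fix d :: real assume "0 < d"
    then obtain \<gamma> where P: "partial_plan \<mu> \<nu> (1 - \<epsilon>) \<gamma>" and w: "w_inf \<gamma> < \<epsilon> + d"
      using W_inf_lessE[OF fin _ _, of "1 - \<epsilon>" "\<epsilon> + d"] \<epsilon> W by auto
    show "LP \<mu> \<nu> \<le> \<epsilon> + d"
    proof (rule LP_le)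
      fix A
      show "measure (measure_pmf \<mu>) A \<le> measure (measure_pmf \<nu>) (thick A (\<epsilon> + d)) + (\<epsilon> + d)"
        using measure_le_thick_partial_plan[OF P w, of A] \<open>0 < d\<close> by simp
      show "measure (measure_pmf \<nu>) A \<le> measure (measure_pmf \<mu>) (thick A (\<epsilon> + d)) + (\<epsilon> + d)"
        using measure_le_thick_partial_plan[OF partial_plan_swap(1)[OF P], of "\<epsilon> + d" A] w
          \<open>0 < d\<close> by (simp add: partial_plan_swap(2)[OF P])
    qed (use \<epsilon> \<open>0 < d\<close> in simp)
  qed
qed

lemma partial_plan_of_flow_with_sink:
  fixes \<mu> \<nu> :: "'a pmf" and R :: "'a \<Rightarrow> 'a option \<Rightarrow> bool"
  assumes fin: "finite (set_pmf \<mu>)" "finite (set_pmf \<nu>)"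
    and f: "saturating_flow R (set_pmf \<mu>) (insert None (Some ` set_pmf \<nu>)) (pmf \<mu>) (case_option s (pmf \<nu>)) f"
  defines "\<gamma> \<equiv> \<lambda>(x, y). f x (Some y)"
  shows "partial_plan \<mu> \<nu> (\<Sum>p\<in>plan_supp \<gamma>. \<gamma> p) \<gamma>" and "1 - s \<le> (\<Sum>p\<in>plan_supp \<gamma>. \<gamma> p)"
    and "\<And>x y. (x, y) \<in> plan_supp \<gamma> \<Longrightarrow> R x (Some y)"
proof -
  let ?Y = "insert None (Some ` set_pmf \<nu>)"
  have nonneg: "\<And>x q. 0 \<le> f x q" and supp_f: "\<And>x q. f x q \<noteq> 0 \<Longrightarrow> x \<in> set_pmf \<mu> \<and> q \<in> ?Y \<and> R x q"
    and row: "\<And>x. x \<in> set_pmf \<mu> \<Longrightarrow> sum (f x) ?Y = pmf \<mu> x"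
    and col: "\<And>q. q \<in> ?Y \<Longrightarrow> (\<Sum>x\<in>set_pmf \<mu>. f x q) \<le> case_option s (pmf \<nu>) q"
    using f unfolding saturating_flow_def by auto
  have row_split: "sum (f x) ?Y = f x None + (\<Sum>y\<in>set_pmf \<nu>. \<gamma> (x, y))" for x
    using fin(2) by (simp add: \<gamma>_def sum.reindex)
  have supp: "plan_supp \<gamma> \<subseteq> set_pmf \<mu> \<times> set_pmf \<nu>"
    using supp_f unfolding plan_supp_def \<gamma>_def by auto
  show "partial_plan \<mu> \<nu> (\<Sum>p\<in>plan_supp \<gamma>. \<gamma> p) \<gamma>"
  proof (rule partial_planI_marginals[OF fin _ supp])
    show "(\<Sum>y\<in>set_pmf \<nu>. \<gamma> (x, y)) \<le> pmf \<mu> x" if "x \<in> set_pmf \<mu>" for x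
      using row[OF that] row_split[of x] nonneg[of x None] by linarith
    show "(\<Sum>x\<in>set_pmf \<mu>. \<gamma> (x, y)) \<le> pmf \<nu> y" if "y \<in> set_pmf \<nu>" for y
      using col[of "Some y"] that by (simp add: \<gamma>_def)
  qed (simp add: \<gamma>_def nonneg case_prod_beta)
  have "(\<Sum>p\<in>plan_supp \<gamma>. \<gamma> p) = (\<Sum>x\<in>set_pmf \<mu>. \<Sum>y\<in>set_pmf \<nu>. \<gamma> (x, y))"
    using sum_plan_supp_Times[OF fin supp, of UNIV UNIV] by simp
  also have "\<dots> = (\<Sum>x\<in>set_pmf \<mu>. pmf \<mu> x - f x None)"
    using row row_split by (intro sum.cong) force+
  also have "\<dots> = 1 - (\<Sum>x\<in>set_pmf \<mu>. f x None)"
    using fin(1) by (simp add: sum_subtractf sum_pmf_eq_1)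
  finally show "1 - s \<le> (\<Sum>p\<in>plan_supp \<gamma>. \<gamma> p)"
    using col[of None] by simp
  show "R x (Some y)" if "(x, y) \<in> plan_supp \<gamma>" for x y
    using that supp_f unfolding plan_supp_def \<gamma>_def by auto
qed

text \<open>The target \<open>None\<close> is the sink: adjacent to every point, with capacity \<open>\<epsilon>\<close>.\<close>

lemma hall_condition_of_thick_bound:
  fixes \<mu> \<nu> :: "'a::metric_space pmf"
  assumes fin: "finite (set_pmf \<mu>)" "finite (set_pmf \<nu>)"
    and bound: "\<And>A. A \<in> sets borel \<Longrightarrow> measure (measure_pmf \<mu>) A \<le> measure (measure_pmf \<nu>) (thick A \<epsilon>) + \<epsilon>"
  shows "hall_condition (\<lambda>x. case_option True (\<lambda>y. dist x y < \<epsilon>)) (set_pmf \<mu>)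
           (insert None (Some ` set_pmf \<nu>)) (pmf \<mu>) (case_option \<epsilon> (pmf \<nu>))"
  unfolding hall_condition_def
proof (intro allI impI)
  fix A assume A: "A \<subseteq> set_pmf \<mu>"
  let ?N = "neighbours (\<lambda>x. case_option True (\<lambda>y. dist x y < \<epsilon>)) (insert None (Some ` set_pmf \<nu>)) A"
  show "sum (pmf \<mu>) A \<le> sum (case_option \<epsilon> (pmf \<nu>)) ?N"
  proof (cases "A = {}")
    case False
    have "finite A"
      using A fin(1) by (rule finite_subset)
    have "?N = insert None (Some ` (set_pmf \<nu> \<inter> thick A \<epsilon>))"
      using False unfolding neighbours_def thick_def by (auto simp: image_iff) (metis dist_commute)+
    then have "sum (case_option \<epsilon> (pmf \<nu>)) ?N = \<epsilon> + measure (measure_pmf \<nu>) (thick A \<epsilon>)"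
      using fin(2) by (simp add: sum.reindex measure_pmf_eq_sum_Int_set_pmf Int_commute)
    moreover have "sum (pmf \<mu>) A = measure (measure_pmf \<mu>) A"
      using \<open>finite A\<close> by (simp add: measure_measure_pmf_finite)
    moreover have "A \<in> sets borel"
      using \<open>finite A\<close> by (intro borel_closed finite_imp_closed)
    ultimately show ?thesis
      using bound[of A] by linarith
  qed (simp add: neighbours_def)
qed

theorem Strassen_partial_plan:
  fixes \<mu> \<nu> :: "'a::metric_space pmf"
  assumes fin: "finite (set_pmf \<mu>)" "finite (set_pmf \<nu>)" and \<epsilon>: "0 \<le> \<epsilon>" "\<epsilon> \<le> 1"
    and bound: "\<And>A. A \<in> sets borel \<Longrightarrow> measure (measure_pmf \<mu>) A \<le> measure (measure_pmf \<nu>) (thick A \<epsilon>) + \<epsilon>"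
  obtains \<gamma> where "partial_plan \<mu> \<nu> (1 - \<epsilon>) \<gamma>" and "w_inf \<gamma> \<le> \<epsilon>"
proof -
  obtain f where "saturating_flow (\<lambda>x. case_option True (\<lambda>y. dist x y < \<epsilon>)) (set_pmf \<mu>)
      (insert None (Some ` set_pmf \<nu>)) (pmf \<mu>) (case_option \<epsilon> (pmf \<nu>)) f"
    using hall_condition_imp_saturating_flow[OF fin(1) _ _ _ hall_condition_of_thick_bound[OF fin bound]]
      fin(2) \<epsilon>(1) by (force split: option.split)
  note flow = partial_plan_of_flow_with_sink[OF fin this]
  define \<gamma> where "\<gamma> = (\<lambda>(x, y). f x (Some y))"
  define m where "m = (\<Sum>p\<in>plan_supp \<gamma>. \<gamma> p)"
  have P: "partial_plan \<mu> \<nu> m \<gamma>" and "1 - \<epsilon> \<le> m"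
    using flow(1,2) unfolding \<gamma>_def m_def by simp_all
  have fin_supp: "finite (plan_supp \<gamma>)"
    using P unfolding partial_plan_def by blast
  have "w_inf \<gamma> \<le> \<epsilon>"
    using flow(3) \<epsilon>(1) unfolding \<gamma>_def[symmetric] by (intro w_inf_le[OF fin_supp]) force+
  then have "w_inf (\<lambda>p. (1 - \<epsilon>) / m * \<gamma> p) \<le> \<epsilon>"
    by (rule order_trans[OF w_inf_mono[OF plan_supp_scale_subset fin_supp]])
  moreover have "partial_plan \<mu> \<nu> (1 - \<epsilon>) (\<lambda>p. (1 - \<epsilon>) / m * \<gamma> p)"
    using P \<epsilon>(2) \<open>1 - \<epsilon> \<le> m\<close> by (intro partial_plan_scale) simp_all
  ultimately show ?thesis
    using that by blast
qed

lemma RPW_inf_le_of_thick_bound: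
  fixes \<mu> \<nu> :: "'a::metric_space pmf"
  assumes fin: "finite (set_pmf \<mu>)" "finite (set_pmf \<nu>)" and "0 \<le> \<epsilon>"
    and bound: "\<And>A. A \<in> sets borel \<Longrightarrow> measure (measure_pmf \<mu>) A \<le> measure (measure_pmf \<nu>) (thick A \<epsilon>) + \<epsilon>"
  shows "RPW_inf 1 \<mu> \<nu> \<le> \<epsilon>"
proof (cases "\<epsilon> \<le> 1")
  case True
  obtain \<gamma> where P: "partial_plan \<mu> \<nu> (1 - \<epsilon>) \<gamma>" and "w_inf \<gamma> \<le> \<epsilon>"
    using Strassen_partial_plan[OF fin \<open>0 \<le> \<epsilon>\<close> True bound] .
  then have "W_inf (1 - \<epsilon>) \<mu> \<nu> \<le> 1 * \<epsilon>"
    using W_inf_le[OF P] by simp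
  then show ?thesis
    by (rule RPW_inf_le[OF \<open>0 \<le> \<epsilon>\<close> True])
next
  case False
  have "RPW_inf 1 \<mu> \<nu> \<le> 1"
    by (rule RPW_inf_le) (simp_all add: W_inf_zero)
  then show ?thesis
    using False by simp
qed

lemma RPW_inf_le_LP:
  fixes \<mu> \<nu> :: "'a::metric_space pmf"
  assumes "finite (set_pmf \<mu>)" "finite (set_pmf \<nu>)"
  shows "RPW_inf 1 \<mu> \<nu> \<le> LP \<mu> \<nu>"
proof -
  have "measure (measure_pmf p) A \<le> measure (measure_pmf q) B + 1" for p q :: "'a pmf" and A B
    using measure_pmf.prob_le_1[of p A] measure_nonneg[of "measure_pmf q" B] by linarith
  then have "1 \<in> {\<epsilon>. 0 < \<epsilon> \<and> (\<forall>A\<in>sets borel.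
      measure (measure_pmf \<mu>) A \<le> measure (measure_pmf \<nu>) (thick A \<epsilon>) + \<epsilon> \<and>
      measure (measure_pmf \<nu>) A \<le> measure (measure_pmf \<mu>) (thick A \<epsilon>) + \<epsilon>)}"
    by simp
  then show ?thesis
    unfolding LP_def using assms
    by (intro cInf_greatest) (blast, auto intro!: RPW_inf_le_of_thick_bound)
qed

theorem lemmaA3:
  fixes \<mu> \<nu> :: "'a::metric_space pmf"
  assumes "\<forall>x y::'a. dist x y \<le> 1"
    and "finite (set_pmf \<mu>)" and "finite (set_pmf \<nu>)"
  shows "RPW_inf 1 \<mu> \<nu> = LP \<mu> \<nu>"
  using RPW_inf_le_LP[OF assms(2,3)] LP_le_RPW_inf[OF assms(2,3)] by (rule antisym)

end
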